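(* Consider the Normal Partizan Domination game on a star $K_{1,n}$ with $n\geq 2$, whose universal (center) vertex has color $A$, with $a$ leaves of color $A$ and $b=n-a$ leaves of color $B$. Its value is: $a-b$ if $b<a$; $1/2^{b-a+1}$ if $b\geq a\geq 1$; $(b-1)\cdot\uparrow *$ if $b$ is odd and $a=0$; $(b-1)\cdot\uparrow$ if $b$ is even and $a=0$. If instead the universal vertex has color $B$, the value is $-J$, where $J$ is the value of the game obtained by interchanging the colors $A$ and $B$ on all vertices.
   Context: Normal Partizan Domination game: a finite graph $G$ has each vertex colored $A$, $B$ or $C$. Alice and Bob alternately select a vertex; Alice may only select vertices colored $A$ or $C$, Bob only vertices colored $B$ or $C$. A vertex $u$ dominates $v$ if $u=v$ or $uv$ is an edge. A vertex may be selected only if it is playable, i.e. it dominates at least one vertex not dominated by the previously selected vertices; the game ends when the selected vertices form a dominating set. Under normal play the player unable to move loses. The game is regarded as a partizan combinatorial game with Alice as Left and Bob as Right, and its value is its value in Conway's combinatorial game theory ($\{X\mid Y\}$ has Left options $X$ and Right options $Y$; $G+H$ is the disjunctive sum; $-G$ swaps Left and Right; $G=H$ iff $G+(-H)$ is a second-player win). Notation: integers and dyadic rationals $1/2^k$ are the usual number games; $*=\{0\mid 0\}$; $\uparrow=\{0\mid *\}$; $m\cdot\uparrow$ is the sum of $m$ copies of $\uparrow$ (and $0\cdot\uparrow=0$); $J*$ denotes $J+*$. *)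

theory Defs
  imports Main
begin

section \<open>Short partizan games (Conway), Left = Alice, Right = Bob\<close>

datatype game = Game "game list" "game list"

text \<open>outc G = (Left wins moving first, Right wins moving first), normal play.\<close>
primrec outc :: "game \<Rightarrow> bool \<times> bool" where
  "outc (Game L R) =
     ((\<exists>p\<in>set (map outc L). \<not> snd p), (\<exists>p\<in>set (map outc R). \<not> fst p))"

definition second_player_win :: "game \<Rightarrow> bool" where
  "second_player_win G \<longleftrightarrow> \<not> fst (outc G) \<and> \<not> snd (outc G)"

primrec neg :: "game \<Rightarrow> game" where
  "neg (Game L R) = Game (map neg R) (map neg L)"

lemma size_opt_lt:
  "x \<in> set L \<Longrightarrow> size x < size (Game L R)"
  "x \<in> set R \<Longrightarrow> size x < size (Game L R)"
  by (auto dest: size_list_estimation'[where f = size, OF _ order_refl])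

function gplus :: "game \<Rightarrow> game \<Rightarrow> game" where
  "gplus (Game GL GR) (Game HL HR) =
     Game (map (\<lambda>x. gplus x (Game HL HR)) GL @ map (\<lambda>y. gplus (Game GL GR) y) HL)
          (map (\<lambda>x. gplus x (Game HL HR)) GR @ map (\<lambda>y. gplus (Game GL GR) y) HR)"
  by pat_completeness auto
termination
  by (relation "measure (\<lambda>(g, h). size g + size h)")
     (auto dest: size_opt_lt[where L = GL and R = GR for GL GR]
                 size_opt_lt[where L = HL and R = HR for HL HR])

definition game_eq :: "game \<Rightarrow> game \<Rightarrow> bool" where
  "game_eq G H \<longleftrightarrow> second_player_win (gplus G (neg H))"

definition zero_g :: game where "zero_g = Game [] []"
definition star_g :: game where "star_g = Game [zero_g] [zero_g]"
definition up_g :: game where "up_g = Game [zero_g] [star_g]"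

primrec nat_g :: "nat \<Rightarrow> game" where
  "nat_g 0 = zero_g"
| "nat_g (Suc n) = Game [nat_g n] []"

definition int_g :: "int \<Rightarrow> game" where
  "int_g z = (if 0 \<le> z then nat_g (nat z) else neg (nat_g (nat (- z))))"

text \<open>half_pow k is the number game 1/2^k.\<close>
primrec half_pow :: "nat \<Rightarrow> game" where
  "half_pow 0 = nat_g 1"
| "half_pow (Suc k) = Game [zero_g] [half_pow k]"

primrec ups :: "nat \<Rightarrow> game" where
  "ups 0 = zero_g"
| "ups (Suc m) = gplus up_g (ups m)"

datatype color = ColA | ColB | ColC

definition swap_col :: "color \<Rightarrow> color" where
  "swap_col x = (case x of ColA \<Rightarrow> ColB | ColB \<Rightarrow> ColA | ColC \<Rightarrow> ColC)"

definition cnbhd :: "nat set \<Rightarrow> (nat \<Rightarrow> nat \<Rightarrow> bool) \<Rightarrow> nat \<Rightarrow> nat set" where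
  "cnbhd V E v = {u \<in> V. u = v \<or> E v u}"

lemma dg_term:
  assumes "v \<in> set (sorted_list_of_set V)" "\<not> cnbhd V E v \<subseteq> D"
  shows "card (V - (D \<union> cnbhd V E v)) < card (V - D)"
proof -
  have fin: "finite V" using assms(1) by (cases "finite V") auto
  have "V - (D \<union> cnbhd V E v) \<subset> V - D"
    using assms(2) unfolding cnbhd_def by auto
  then show ?thesis using fin by (meson finite_Diff psubset_card_mono)
qed

text \<open>Game position: D is the set of vertices dominated so far.\<close>
function dg :: "nat set \<Rightarrow> (nat \<Rightarrow> nat \<Rightarrow> bool) \<Rightarrow> (nat \<Rightarrow> color) \<Rightarrow> nat set \<Rightarrow> game" where
  "dg V E c D =
     Game (map (\<lambda>v. dg V E c (D \<union> cnbhd V E v))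
             (filter (\<lambda>v. c v \<noteq> ColB \<and> \<not> cnbhd V E v \<subseteq> D) (sorted_list_of_set V)))
          (map (\<lambda>v. dg V E c (D \<union> cnbhd V E v))
             (filter (\<lambda>v. c v \<noteq> ColA \<and> \<not> cnbhd V E v \<subseteq> D) (sorted_list_of_set V)))"
  by pat_completeness auto
termination
  by (relation "measure (\<lambda>(V, E, c, D). card (V - D))") (auto intro: dg_term)

definition dom_game :: "nat set \<Rightarrow> (nat \<Rightarrow> nat \<Rightarrow> bool) \<Rightarrow> (nat \<Rightarrow> color) \<Rightarrow> game" where
  "dom_game V E c = dg V E c {}"

text \<open>Star K_{1,n}: vertex 0 is the centre, vertices 1..n are the leaves.\<close>
definition star_adj :: "nat \<Rightarrow> nat \<Rightarrow> bool" where
  "star_adj u v \<longleftrightarrow> (u = 0 \<and> v \<noteq> 0) \<or> (v = 0 \<and> u \<noteq> 0)"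

definition star_game :: "nat \<Rightarrow> (nat \<Rightarrow> color) \<Rightarrow> game" where
  "star_game n c = dom_game {0..n} star_adj c"

end

(* In the star game with centre coloured A, a position only depends on the numbers p and q of
   undominated A- and B-leaves: Alice may end the game at the centre (value 0) or take an
   A-leaf, Bob may only take a B-leaf.  So the game equals
   star_pos p q = {0, star_pos (p - 1) q | star_pos p (q - 1)}, which is evaluated by induction:
   for q < p it is the integer p - q; for 1 <= p <= q it is {0 | 1/2^(q-p)} = 1/2^(q-p+1);
   for p = 0 the values start with 0, *, up, and from then on every further B-leaf adds up + *.
   If the centre is coloured B, interchanging A and B exchanges the roles of the players,
   which negates every position. *)

theory Submission
  imports Defs
begin

section \<open>Order, equality and sums of games\<close>

primrec lefts :: "game \<Rightarrow> game list" where
  "lefts (Game L R) = L"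

primrec rights :: "game \<Rightarrow> game list" where
  "rights (Game L R) = R"

lemma size_lefts: "x \<in> set (lefts G) \<Longrightarrow> size x < size G"
  by (cases G) (simp only: lefts.simps size_opt_lt)

lemma size_rights: "x \<in> set (rights G) \<Longrightarrow> size x < size G"
  by (cases G) (simp only: rights.simps size_opt_lt)

lemma lefts_gplus: "lefts (gplus G H) = map (\<lambda>x. gplus x H) (lefts G) @ map (gplus G) (lefts H)"
  by (cases G; cases H) auto

lemma rights_gplus: "rights (gplus G H) = map (\<lambda>x. gplus x H) (rights G) @ map (gplus G) (rights H)"
  by (cases G; cases H) auto

lemma lefts_neg: "lefts (neg G) = map neg (rights G)"
  by (cases G) auto

lemma rights_neg: "rights (neg G) = map neg (lefts G)"
  by (cases G) auto

lemma outc_lefts_rights: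
  "outc G = ((\<exists>l\<in>set (lefts G). \<not> snd (outc l)), (\<exists>r\<in>set (rights G). \<not> fst (outc r)))"
  by (cases G) auto

lemma neg_neg [simp]: "neg (neg G) = G"
  by (induction G) (auto simp: map_idI)

lemma outc_neg: "outc (neg G) = prod.swap (outc G)"
  by (induction G) auto

lemma neg_gplus: "neg (gplus G H) = gplus (neg G) (neg H)"
proof (induction "size G + size H" arbitrary: G H rule: less_induct)
  case less
  show ?case
  proof (cases G; cases H)
    fix GL GR HL HR assume GH: "G = Game GL GR" "H = Game HL HR"
    then have "x \<in> set GL \<union> set GR \<Longrightarrow> size x < size G"
      and "x \<in> set HL \<union> set HR \<Longrightarrow> size x < size H" for x
      using size_opt_lt by auto
    then show ?thesis using GH less by auto
  qed
qed

lemma gplus_zero_right [simp]: "gplus G zero_g = G"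
  by (induction G) (auto simp: zero_g_def map_idI)

lemma gplus_zero_left [simp]: "gplus zero_g G = G"
  by (induction G) (auto simp: zero_g_def map_idI)

lemma neg_zero_g [simp]: "neg zero_g = zero_g"
  by (simp add: zero_g_def)

lemma neg_star_g [simp]: "neg star_g = star_g"
  by (simp add: star_g_def)

lemma outc_gplus_commute: "outc (gplus G H) = outc (gplus H G)"
proof (induction "size G + size H" arbitrary: G H rule: less_induct)
  case less
  have IH: "x \<in> set (lefts G) \<union> set (rights G) \<Longrightarrow> outc (gplus x H) = outc (gplus H x)"
    "y \<in> set (lefts H) \<union> set (rights H) \<Longrightarrow> outc (gplus G y) = outc (gplus y G)" for x y
    by (intro less; auto dest: size_lefts size_rights)+
  show ?case
    by (subst (1 2) outc_lefts_rights) (simp add: lefts_gplus rights_gplus IH bex_Un disj_commute)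
qed

text \<open>\<open>game_gf G H\<close> is Conway's \<open>G \<rhd> H\<close> (greater than or confused with): Left, moving
  first, wins \<open>G - H\<close>.\<close>

definition game_ge :: "game \<Rightarrow> game \<Rightarrow> bool" where
  "game_ge G H \<longleftrightarrow> \<not> snd (outc (gplus G (neg H)))"

definition game_gf :: "game \<Rightarrow> game \<Rightarrow> bool" where
  "game_gf G H \<longleftrightarrow> fst (outc (gplus G (neg H)))"

lemma game_ge_iff:
  "game_ge G H \<longleftrightarrow> (\<forall>r\<in>set (rights G). game_gf r H) \<and> (\<forall>l\<in>set (lefts H). game_gf G l)"
  unfolding game_ge_def game_gf_def
  by (subst outc_lefts_rights) (auto simp: rights_gplus rights_neg)

lemma game_gf_iff:
  "game_gf G H \<longleftrightarrow> (\<exists>l\<in>set (lefts G). game_ge l H) \<or> (\<exists>r\<in>set (rights H). game_ge G r)"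
  unfolding game_ge_def game_gf_def
  by (subst outc_lefts_rights) (auto simp: lefts_gplus lefts_neg)

lemma game_gf_iff_not_ge: "game_gf G H \<longleftrightarrow> \<not> game_ge H G"
proof -
  have "fst (outc (gplus G (neg H))) = snd (outc (neg (gplus G (neg H))))"
    by (simp add: outc_neg)
  also have "\<dots> = snd (outc (gplus H (neg G)))"
    by (simp add: neg_gplus outc_gplus_commute)
  finally show ?thesis
    unfolding game_ge_def game_gf_def by simp
qed

lemma game_eq_iff_ge: "game_eq G H \<longleftrightarrow> game_ge G H \<and> game_ge H G"
  using game_gf_iff_not_ge[of G H]
  unfolding game_eq_def second_player_win_def game_ge_def game_gf_def by auto

lemma game_geI:
  "(\<And>r. r \<in> set (rights G) \<Longrightarrow> game_gf r H) \<Longrightarrow> (\<And>l. l \<in> set (lefts H) \<Longrightarrow> game_gf G l)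
    \<Longrightarrow> game_ge G H"
  using game_ge_iff by blast

lemma game_gfI_left: "l \<in> set (lefts G) \<Longrightarrow> game_ge l H \<Longrightarrow> game_gf G H"
  using game_gf_iff by blast

lemma game_gfI_right: "r \<in> set (rights H) \<Longrightarrow> game_ge G r \<Longrightarrow> game_gf G H"
  using game_gf_iff by blast

lemma game_ge_rightsD: "game_ge G H \<Longrightarrow> r \<in> set (rights G) \<Longrightarrow> game_gf r H"
  using game_ge_iff by blast

lemma game_ge_leftsD: "game_ge G H \<Longrightarrow> l \<in> set (lefts H) \<Longrightarrow> game_gf G l"
  using game_ge_iff by blast

lemma game_ge_refl [simp]: "game_ge G G"
proof (induction G)
  case (Game L R)
  show ?case
    by (rule game_geI) (auto intro: game_gfI_left game_gfI_right Game)
qed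

lemma game_ge_gf_trans_simultaneous:
  "(game_ge A B \<longrightarrow> game_ge B C \<longrightarrow> game_ge A C)
   \<and> (game_gf A B \<longrightarrow> game_ge B C \<longrightarrow> game_gf A C)
   \<and> (game_ge A B \<longrightarrow> game_gf B C \<longrightarrow> game_gf A C)"
proof (induction "size A + size B + size C" arbitrary: A B C rule: less_induct)
  case less
  note IH = less[rule_format]
  have ge_ge: "game_ge A C" if AB: "game_ge A B" and BC: "game_ge B C"
  proof (rule game_geI)
    fix r assume r: "r \<in> set (rights A)"
    then show "game_gf r C"
      using IH[of r B C] game_ge_rightsD[OF AB r] BC size_rights[OF r] by auto
  next
    fix l assume l: "l \<in> set (lefts C)"
    then show "game_gf A l"
      using IH[of A B l] game_ge_leftsD[OF BC l] AB size_lefts[OF l] by auto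
  qed
  have gf_ge: "game_gf A C" if AB: "game_gf A B" and BC: "game_ge B C"
  proof -
    from AB consider (left) l where "l \<in> set (lefts A)" "game_ge l B"
      | (right) r where "r \<in> set (rights B)" "game_ge A r"
      unfolding game_gf_iff by blast
    then show ?thesis
    proof cases
      case left
      then show ?thesis
        using IH[of l B C] BC size_lefts game_gfI_left by fastforce
    next
      case right
      then show ?thesis
        using IH[of A r C] game_ge_rightsD[OF BC] size_rights by fastforce
    qed
  qed
  have ge_gf: "game_gf A C" if AB: "game_ge A B" and BC: "game_gf B C"
  proof -
    from BC consider (left) l where "l \<in> set (lefts B)" "game_ge l C"
      | (right) r where "r \<in> set (rights C)" "game_ge B r"
      unfolding game_gf_iff by blast
    then show ?thesis
    proof cases
      case left
      then show ?thesis
        using IH[of A l C] game_ge_leftsD[OF AB] size_lefts by fastforce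
    next
      case right
      then show ?thesis
        using IH[of A B r] AB size_rights game_gfI_right by fastforce
    qed
  qed
  show ?case
    using ge_ge gf_ge ge_gf by blast
qed

lemma game_ge_trans: "game_ge A B \<Longrightarrow> game_ge B C \<Longrightarrow> game_ge A C"
  using game_ge_gf_trans_simultaneous by blast

lemma game_gf_ge_trans: "game_gf A B \<Longrightarrow> game_ge B C \<Longrightarrow> game_gf A C"
  using game_ge_gf_trans_simultaneous by blast

lemma game_ge_gf_trans: "game_ge A B \<Longrightarrow> game_gf B C \<Longrightarrow> game_gf A C"
  using game_ge_gf_trans_simultaneous by blast

lemma game_eq_refl [simp]: "game_eq G G"
  by (simp add: game_eq_iff_ge)

lemma game_eq_sym: "game_eq G H \<Longrightarrow> game_eq H G"
  by (auto simp: game_eq_iff_ge)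

lemma game_eq_trans [trans]: "game_eq A B \<Longrightarrow> game_eq B C \<Longrightarrow> game_eq A C"
  by (meson game_eq_iff_ge game_ge_trans)

lemma game_eq_imp_ge: "game_eq G H \<Longrightarrow> game_ge G H"
  and game_eq_imp_le: "game_eq G H \<Longrightarrow> game_ge H G"
  by (simp_all add: game_eq_iff_ge)

lemma game_ge_cong: "game_eq A A' \<Longrightarrow> game_eq B B' \<Longrightarrow> game_ge A B \<Longrightarrow> game_ge A' B'"
  by (meson game_eq_iff_ge game_ge_trans)

lemma game_eq_optionsI:
  assumes "rel_set game_eq (set (lefts G)) (set (lefts H))"
    and "rel_set game_eq (set (rights G)) (set (rights H))"
  shows "game_eq G H"
  using assms unfolding game_eq_iff_ge rel_set_def
  by (intro conjI game_geI)
     (meson game_eq_imp_ge game_eq_imp_le game_gfI_left game_gfI_right)+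

lemma gplus_mono_right_simultaneous:
  "(game_ge A B \<longrightarrow> game_ge (gplus A C) (gplus B C))
   \<and> (game_gf A B \<longrightarrow> game_gf (gplus A C) (gplus B C))"
proof (induction "size A + size B + size C" arbitrary: A B C rule: less_induct)
  case less
  note IH = less[rule_format]
  have ge: "game_ge (gplus A C) (gplus B C)" if AB: "game_ge A B"
  proof (rule game_geI)
    fix r assume "r \<in> set (rights (gplus A C))"
    then consider (A) a where "a \<in> set (rights A)" "r = gplus a C"
      | (C) c where "c \<in> set (rights C)" "r = gplus A c"
      by (auto simp: rights_gplus)
    then show "game_gf r (gplus B C)"
    proof cases
      case A
      then show ?thesis
        using IH[of a B C] game_ge_rightsD[OF AB A(1)] size_rights[OF A(1)] by auto
    next
      case C
      then have "game_ge r (gplus B c)"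
        using IH[of A B c] AB size_rights[OF C(1)] by auto
      then show ?thesis
        using C by (intro game_gfI_right[of "gplus B c"]) (auto simp: rights_gplus)
    qed
  next
    fix l assume "l \<in> set (lefts (gplus B C))"
    then consider (B) b where "b \<in> set (lefts B)" "l = gplus b C"
      | (C) c where "c \<in> set (lefts C)" "l = gplus B c"
      by (auto simp: lefts_gplus)
    then show "game_gf (gplus A C) l"
    proof cases
      case B
      then show ?thesis
        using IH[of A b C] game_ge_leftsD[OF AB B(1)] size_lefts[OF B(1)] by auto
    next
      case C
      then have "game_ge (gplus A c) l"
        using IH[of A B c] AB size_lefts[OF C(1)] by auto
      then show ?thesis
        using C by (intro game_gfI_left[of "gplus A c"]) (auto simp: lefts_gplus)
    qed
  qed
  have gf: "game_gf (gplus A C) (gplus B C)" if AB: "game_gf A B"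
  proof -
    from AB consider (left) l where "l \<in> set (lefts A)" "game_ge l B"
      | (right) r where "r \<in> set (rights B)" "game_ge A r"
      unfolding game_gf_iff by blast
    then show ?thesis
    proof cases
      case left
      then have "game_ge (gplus l C) (gplus B C)"
        using IH[of l B C] size_lefts[OF left(1)] by auto
      then show ?thesis
        using left by (intro game_gfI_left[of "gplus l C"]) (auto simp: lefts_gplus)
    next
      case right
      then have "game_ge (gplus A C) (gplus r C)"
        using IH[of A r C] size_rights[OF right(1)] by auto
      then show ?thesis
        using right by (intro game_gfI_right[of "gplus r C"]) (auto simp: rights_gplus)
    qed
  qed
  show ?case
    using ge gf by blast
qed

lemma gplus_commute: "game_eq (gplus A B) (gplus B A)"
proof (induction "size A + size B" arbitrary: A B rule: less_induct)
  case less
  have "x \<in> set (lefts A) \<union> set (rights A) \<Longrightarrow> game_eq (gplus x B) (gplus B x)"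
    and "y \<in> set (lefts B) \<union> set (rights B) \<Longrightarrow> game_eq (gplus A y) (gplus y A)" for x y
    by (intro less; auto dest: size_lefts size_rights)+
  then show ?case
    by (intro game_eq_optionsI)
       (auto simp: rel_set_def lefts_gplus rights_gplus intro: game_eq_sym)
qed

lemma gplus_assoc: "game_eq (gplus (gplus A B) C) (gplus A (gplus B C))"
proof (induction "size A + size B + size C" arbitrary: A B C rule: less_induct)
  case less
  have "x \<in> set (lefts A) \<union> set (rights A)
          \<Longrightarrow> game_eq (gplus (gplus x B) C) (gplus x (gplus B C))"
    and "y \<in> set (lefts B) \<union> set (rights B)
          \<Longrightarrow> game_eq (gplus (gplus A y) C) (gplus A (gplus y C))"
    and "z \<in> set (lefts C) \<union> set (rights C)
          \<Longrightarrow> game_eq (gplus (gplus A B) z) (gplus A (gplus B z))" for x y z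
    by (intro less; auto dest: size_lefts size_rights)+
  then show ?case
    by (intro game_eq_optionsI)
       (auto simp: rel_set_def lefts_gplus rights_gplus intro: game_eq_sym)
qed

lemma gplus_mono_right: "game_ge A B \<Longrightarrow> game_ge (gplus A C) (gplus B C)"
  using gplus_mono_right_simultaneous by blast

lemma gplus_mono_left: "game_ge A B \<Longrightarrow> game_ge (gplus C A) (gplus C B)"
  by (meson game_ge_cong gplus_mono_right gplus_commute)

lemma gplus_cong_right: "game_eq A B \<Longrightarrow> game_eq (gplus A C) (gplus B C)"
  by (simp add: game_eq_iff_ge gplus_mono_right)

lemma gplus_cong_left: "game_eq A B \<Longrightarrow> game_eq (gplus C A) (gplus C B)"
  by (simp add: game_eq_iff_ge gplus_mono_left)

lemma gplus_star_star: "game_eq (gplus star_g star_g) zero_g"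
  using game_eq_refl[of star_g] unfolding game_eq_def by simp

lemma lefts_rights_named_games [simp]:
  "lefts zero_g = []" "rights zero_g = []"
  "lefts star_g = [zero_g]" "rights star_g = [zero_g]"
  "lefts up_g = [zero_g]" "rights up_g = [star_g]"
  by (simp_all add: zero_g_def star_g_def up_g_def)

section \<open>Star positions and their values\<close>

fun star_pos :: "nat \<Rightarrow> nat \<Rightarrow> game" where
  "star_pos 0 0 = zero_g"
| "star_pos (Suc p) 0 = Game [zero_g, star_pos p 0] []"
| "star_pos 0 (Suc q) = Game [zero_g] [star_pos 0 q]"
| "star_pos (Suc p) (Suc q) = Game [zero_g, star_pos p (Suc q)] [star_pos (Suc p) q]"

lemma lefts_star_pos [simp]:
  "lefts (star_pos (Suc p) q) = [zero_g, star_pos p q]"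
  "lefts (star_pos 0 (Suc q)) = [zero_g]"
  by (cases q; simp)+

lemma rights_star_pos [simp]:
  "rights (star_pos p (Suc q)) = [star_pos p q]"
  "rights (star_pos p 0) = []"
  by (cases p; simp)+

declare star_pos.simps(2-4) [simp del]

lemma star_pos_0_1: "star_pos 0 (Suc 0) = star_g"
  by (simp add: star_g_def star_pos.simps)

lemma star_pos_0_2: "star_pos 0 (Suc (Suc 0)) = up_g"
  by (simp add: star_g_def up_g_def star_pos.simps)

lemma star_pos_zero_order:
  "(j \<le> i \<and> i \<noteq> Suc j \<longrightarrow> game_ge (star_pos 0 i) (star_pos 0 j))
   \<and> (j \<le> Suc i \<and> i \<noteq> j \<longrightarrow> game_gf (star_pos 0 i) (star_pos 0 j))"
proof (induction "i + j" arbitrary: i j rule: less_induct)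
  case less
  note IH = less[rule_format]
  have ge: "game_ge (star_pos 0 i) (star_pos 0 j)" if "j \<le> i" "i \<noteq> Suc j"
  proof (rule game_geI)
    fix r assume "r \<in> set (rights (star_pos 0 i))"
    then obtain i' where "i = Suc i'" "r = star_pos 0 i'"
      by (cases i) auto
    then show "game_gf r (star_pos 0 j)"
      using IH[of i' j] that by auto
  next
    fix l assume "l \<in> set (lefts (star_pos 0 j))"
    then obtain j' where "j = Suc j'" "l = zero_g"
      by (cases j) auto
    then show "game_gf (star_pos 0 i) l"
      using IH[of i 0] that by auto
  qed
  have gf: "game_gf (star_pos 0 i) (star_pos 0 j)" if "j \<le> Suc i" "i \<noteq> j"
  proof (cases j)
    case 0
    with that obtain i' where "i = Suc i'"
      by (cases i) auto
    then show ?thesis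
      using 0 by (intro game_gfI_left[of zero_g]) auto
  next
    case (Suc j')
    then show ?thesis
      using IH[of i j'] that by (intro game_gfI_right[of "star_pos 0 j'"]) auto
  qed
  show ?case
    using ge gf by blast
qed

lemma star_pos_zero_ge: "j \<le> i \<Longrightarrow> i \<noteq> Suc j \<Longrightarrow> game_ge (star_pos 0 i) (star_pos 0 j)"
  using star_pos_zero_order by blast

lemma star_pos_zero_gf: "j \<le> Suc i \<Longrightarrow> i \<noteq> j \<Longrightarrow> game_gf (star_pos 0 i) (star_pos 0 j)"
  using star_pos_zero_order by blast

lemma star_pos_zero_ge_zero: "i \<noteq> 1 \<Longrightarrow> game_ge (star_pos 0 i) zero_g"
  using star_pos_zero_ge[of 0 i] by simp

lemma game_gf_star_if_ge_zero: "game_ge G zero_g \<Longrightarrow> game_gf G star_g"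
  by (rule game_gfI_right[of zero_g]) auto

lemma star_pos_zero_ge_plus_star:
  "game_ge (star_pos 0 (Suc (Suc k))) (gplus (star_pos 0 (Suc k)) star_g)"
proof (rule game_geI)
  fix r assume "r \<in> set (rights (star_pos 0 (Suc (Suc k))))"
  then show "game_gf r (gplus (star_pos 0 (Suc k)) star_g)"
    by (intro game_gfI_right[of r]) (auto simp: rights_gplus)
next
  fix l assume "l \<in> set (lefts (gplus (star_pos 0 (Suc k)) star_g))"
  then show "game_gf (star_pos 0 (Suc (Suc k))) l"
    using star_pos_zero_gf[of "Suc k" "Suc (Suc k)"]
      game_gf_star_if_ge_zero[OF star_pos_zero_ge_zero[of "Suc (Suc k)"]]
    by (auto simp: lefts_gplus)
qed

lemma star_pos_zero_gf_plus_star: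
  "game_gf (star_pos 0 (Suc (Suc k))) (gplus (star_pos 0 (Suc k)) star_g)"
proof (induction k)
  case 0
  have "game_ge zero_g (gplus star_g star_g)"
    using game_eq_imp_le[OF gplus_star_star] .
  then show ?case
    by (intro game_gfI_left[of zero_g]) (auto simp: star_pos_0_1)
next
  case (Suc k)
  let ?G = "star_pos 0 (Suc (Suc (Suc k)))"
  have "game_ge ?G (gplus (star_pos 0 (Suc k)) star_g)"
  proof (rule game_geI)
    fix r assume "r \<in> set (rights ?G)"
    then show "game_gf r (gplus (star_pos 0 (Suc k)) star_g)"
      using Suc.IH by simp
  next
    fix l assume "l \<in> set (lefts (gplus (star_pos 0 (Suc k)) star_g))"
    then show "game_gf ?G l"
      using star_pos_zero_gf[of "Suc k" "Suc (Suc (Suc k))"]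
        game_gf_star_if_ge_zero[OF star_pos_zero_ge_zero[of "Suc (Suc (Suc k))"]]
      by (auto simp: lefts_gplus)
  qed
  then show ?case
    by (intro game_gfI_right[of "gplus (star_pos 0 (Suc k)) star_g"]) (auto simp: rights_gplus)
qed

lemma game_ge_gplus_up: "game_ge (gplus G up_g) G"
proof -
  have "game_ge up_g zero_g"
    by (rule game_geI) (auto intro: game_gfI_left[of zero_g])
  then show ?thesis
    using gplus_mono_left[of up_g zero_g G] by simp
qed

lemma gplus_star_star_right: "game_eq (gplus G (gplus star_g star_g)) G"
  using gplus_cong_left[OF gplus_star_star, of G] by simp

lemma rights_gplus_up_star [simp]: "rights (gplus up_g star_g) = [gplus star_g star_g, up_g]"
  by (simp add: rights_gplus)

lemma star_pos_zero_ge_plus_up_star: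
  "game_ge (star_pos 0 (Suc (Suc (Suc k)))) (gplus (star_pos 0 (Suc (Suc k))) (gplus up_g star_g))"
  (is "game_ge ?R (gplus ?E ?U)")
proof (rule game_geI)
  fix r assume "r \<in> set (rights ?R)"
  then show "game_gf r (gplus ?E ?U)"
    using game_eq_imp_le[OF gplus_star_star_right[of ?E]]
    by (intro game_gfI_right[of "gplus ?E (gplus star_g star_g)"]) (auto simp: rights_gplus)
next
  have R_ge_zero: "game_ge ?R zero_g"
    by (rule star_pos_zero_ge_zero) simp
  fix l assume "l \<in> set (lefts (gplus ?E ?U))"
  then have "l = ?U \<or> l = gplus ?E star_g \<or> l = gplus ?E up_g"
    by (simp add: lefts_gplus)
  moreover have "game_gf ?R ?U"
    using game_ge_cong[OF game_eq_refl game_eq_sym[OF gplus_star_star] R_ge_zero]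
    by (intro game_gfI_right[of "gplus star_g star_g"]) auto
  moreover have "game_gf ?R (gplus ?E star_g)"
    by (rule star_pos_zero_gf_plus_star)
  moreover have "game_gf ?R (gplus ?E up_g)"
    using star_pos_zero_ge_plus_star[of "Suc k"]
    by (intro game_gfI_right[of "gplus ?E star_g"]) (auto simp: rights_gplus)
  ultimately show "game_gf ?R l"
    by blast
qed

lemma star_pos_zero_plus_up_star_ge:
  assumes "game_ge (gplus (star_pos 0 (Suc k)) (gplus up_g star_g)) (star_pos 0 (Suc (Suc k)))"
  shows "game_ge (gplus (star_pos 0 (Suc (Suc k))) (gplus up_g star_g)) (star_pos 0 (Suc (Suc (Suc k))))"
  (is "game_ge (gplus ?E ?U) ?R")
proof (rule game_geI)
  fix r assume "r \<in> set (rights (gplus ?E ?U))"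
  then have "game_ge r ?E"
    using assms game_eq_imp_ge[OF gplus_star_star_right] game_ge_gplus_up
    by (auto simp: rights_gplus)
  then show "game_gf r ?R"
    by (intro game_gfI_right[of ?E]) auto
next
  fix l assume "l \<in> set (lefts ?R)"
  then show "game_gf (gplus ?E ?U) l"
    using game_ge_trans[OF game_ge_gplus_up star_pos_zero_ge_zero[of "Suc (Suc k)"]]
    by (intro game_gfI_left[of "gplus ?E up_g"]) (auto simp: lefts_gplus)
qed

lemma star_plus_up_star: "game_eq (gplus star_g (gplus up_g star_g)) up_g"
proof -
  have "game_eq (gplus star_g (gplus up_g star_g)) (gplus star_g (gplus star_g up_g))"
    by (rule gplus_cong_left[OF gplus_commute])
  also have "game_eq \<dots> (gplus (gplus star_g star_g) up_g)"
    by (rule game_eq_sym[OF gplus_assoc])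
  also have "game_eq \<dots> up_g"
    using gplus_cong_right[OF gplus_star_star, of up_g] by simp
  finally show ?thesis .
qed

lemma star_pos_zero_add_up_star:
  "game_eq (star_pos 0 (Suc (Suc (Suc k)))) (gplus (star_pos 0 (Suc (Suc k))) (gplus up_g star_g))"
proof (induction k)
  case 0
  have "game_ge (gplus (star_pos 0 (Suc 0)) (gplus up_g star_g)) (star_pos 0 (Suc (Suc 0)))"
    using game_eq_imp_ge[OF star_plus_up_star] by (simp add: star_pos_0_1 star_pos_0_2)
  then show ?case
    using star_pos_zero_ge_plus_up_star star_pos_zero_plus_up_star_ge
    by (simp add: game_eq_iff_ge)
next
  case (Suc k)
  then show ?case
    using star_pos_zero_ge_plus_up_star star_pos_zero_plus_up_star_ge
    by (simp add: game_eq_iff_ge)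
qed

lemma ups_plus_up_star: "game_eq (gplus (ups m) (gplus up_g star_g)) (gplus (ups (Suc m)) star_g)"
proof -
  have "game_eq (gplus (ups m) (gplus up_g star_g)) (gplus (gplus (ups m) up_g) star_g)"
    by (rule game_eq_sym[OF gplus_assoc])
  also have "game_eq \<dots> (gplus (ups (Suc m)) star_g)"
    by (simp add: gplus_cong_right[OF gplus_commute])
  finally show ?thesis .
qed

lemma ups_star_plus_up_star: "game_eq (gplus (gplus (ups m) star_g) (gplus up_g star_g)) (ups (Suc m))"
proof -
  have "game_eq (gplus (gplus (ups m) star_g) (gplus up_g star_g))
      (gplus (ups m) (gplus star_g (gplus up_g star_g)))"
    by (rule gplus_assoc)
  also have "game_eq \<dots> (gplus (ups m) up_g)"
    by (rule gplus_cong_left[OF star_plus_up_star])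
  also have "game_eq \<dots> (ups (Suc m))"
    by (simp add: gplus_commute)
  finally show ?thesis .
qed

lemma star_pos_zero_value:
  "game_eq (star_pos 0 q) (if odd q then gplus (ups (q - 1)) star_g else ups (q - 1))"
proof (induction q rule: less_induct)
  case (less q)
  consider "q = 0" | "q = Suc 0" | "q = Suc (Suc 0)" | (step) k where "q = Suc (Suc (Suc k))"
    by (metis not0_implies_Suc)
  then show ?case
  proof cases
    case step
    have IH: "game_eq (star_pos 0 (Suc (Suc k)))
        (if odd k then gplus (ups (Suc k)) star_g else ups (Suc k))"
      using less[of "Suc (Suc k)"] step by (simp del: ups.simps cong: if_cong)
    have "game_eq (star_pos 0 q) (gplus (star_pos 0 (Suc (Suc k))) (gplus up_g star_g))"
      using step star_pos_zero_add_up_star by simp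
    also have "game_eq \<dots> (gplus (if odd k then gplus (ups (Suc k)) star_g else ups (Suc k))
        (gplus up_g star_g))"
      using IH by (rule gplus_cong_right)
    also have "game_eq \<dots> (if odd q then gplus (ups (q - 1)) star_g else ups (q - 1))"
      using step ups_plus_up_star ups_star_plus_up_star by (simp del: ups.simps)
    finally show ?thesis .
  qed (simp_all add: star_pos_0_1 star_pos_0_2)
qed

lemma lefts_nat_g [simp]: "lefts (nat_g 0) = []" "lefts (nat_g (Suc m)) = [nat_g m]"
  and rights_nat_g [simp]: "rights (nat_g m) = []"
  by (cases m; simp)+

lemma lefts_half_pow [simp]: "lefts (half_pow j) = [zero_g]"
  and rights_half_pow [simp]: "rights (half_pow 0) = []" "rights (half_pow (Suc j)) = [half_pow j]"
  by (cases j) simp_all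

lemma half_pow_0: "half_pow 0 = nat_g (Suc 0)"
  by simp

declare nat_g.simps(2) [simp del] half_pow.simps [simp del]

lemma nat_g_ge_zero: "game_ge (nat_g m) zero_g"
  by (rule game_geI) (cases m; simp)+

lemma nat_g_gf_pred: "game_gf (nat_g (Suc m)) (nat_g m)"
  by (rule game_gfI_left[of "nat_g m"]) simp_all

lemma half_pow_gf_Suc: "game_gf (half_pow j) (half_pow (Suc j))"
  by (rule game_gfI_right[of "half_pow j"]) simp_all

lemma half_pow_gf_zero: "game_gf (half_pow j) zero_g"
  by (rule game_gfI_left[of zero_g]) simp_all

lemma half_pow_ge_star_pos_zero: "game_ge (half_pow j) (star_pos 0 q)"
proof (induction q arbitrary: j)
  case 0
  show ?case
  proof (rule game_geI)
    fix r assume "r \<in> set (rights (half_pow j))"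
    then show "game_gf r (star_pos 0 0)"
      by (cases j) (auto simp: half_pow_gf_zero)
  qed simp
next
  case (Suc q)
  show ?case
  proof (rule game_geI)
    fix r assume "r \<in> set (rights (half_pow j))"
    then show "game_gf r (star_pos 0 (Suc q))"
      using Suc.IH by (cases j) (auto intro: game_gfI_right[of "star_pos 0 q"])
  qed (simp add: half_pow_gf_zero)
qed

lemma half_pow_gf_star_pos_zero: "0 < q \<Longrightarrow> game_gf (half_pow j) (star_pos 0 q)"
  by (cases q) (auto intro: game_gfI_right half_pow_ge_star_pos_zero)

lemma star_pos_eq_nat_gI:
  assumes "game_gf (nat_g (Suc k)) (star_pos p q)"
    and "0 < k \<Longrightarrow> game_ge (star_pos p q) (nat_g k)"
    and "0 < q \<Longrightarrow> game_ge (star_pos (Suc p) (q - 1)) (nat_g (Suc (Suc k)))"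
  shows "game_eq (star_pos (Suc p) q) (nat_g (Suc k))"
  unfolding game_eq_iff_ge
proof
  show "game_ge (star_pos (Suc p) q) (nat_g (Suc k))"
  proof (rule game_geI)
    fix r assume "r \<in> set (rights (star_pos (Suc p) q))"
    then show "game_gf r (nat_g (Suc k))"
      using assms(3) game_ge_gf_trans[OF _ nat_g_gf_pred] by (cases q) auto
  next
    fix l assume "l \<in> set (lefts (nat_g (Suc k)))"
    then show "game_gf (star_pos (Suc p) q) l"
      using assms(2)
      by (cases k) (auto intro: game_gfI_left[of zero_g] game_gfI_left[of "star_pos p q"])
  qed
  show "game_ge (nat_g (Suc k)) (star_pos (Suc p) q)"
  proof (rule game_geI)
    fix l assume "l \<in> set (lefts (star_pos (Suc p) q))"
    then show "game_gf (nat_g (Suc k)) l"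
      using assms(1) nat_g_ge_zero by (auto intro: game_gfI_left[of "nat_g k"])
  qed simp
qed

lemma star_pos_eq_half_powI:
  assumes "0 < q" and "game_eq (star_pos (Suc p) (q - 1)) (half_pow j)"
    and "game_gf (half_pow (Suc j)) (star_pos p q)"
  shows "game_eq (star_pos (Suc p) q) (half_pow (Suc j))"
  unfolding game_eq_iff_ge
proof
  show "game_ge (star_pos (Suc p) q) (half_pow (Suc j))"
  proof (rule game_geI)
    fix r assume "r \<in> set (rights (star_pos (Suc p) q))"
    then show "game_gf r (half_pow (Suc j))"
      using assms(1,2) game_ge_gf_trans[OF game_eq_imp_ge half_pow_gf_Suc] by (cases q) auto
  next
    fix l assume "l \<in> set (lefts (half_pow (Suc j)))"
    then show "game_gf (star_pos (Suc p) q) l"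
      by (auto intro: game_gfI_left[of zero_g])
  qed
  show "game_ge (half_pow (Suc j)) (star_pos (Suc p) q)"
  proof (rule game_geI)
    fix r assume "r \<in> set (rights (half_pow (Suc j)))"
    then show "game_gf r (star_pos (Suc p) q)"
      using assms(1,2) game_eq_imp_le
      by (cases q) (auto intro: game_gfI_right[of "star_pos (Suc p) (q - 1)"])
  next
    fix l assume "l \<in> set (lefts (star_pos (Suc p) q))"
    then show "game_gf (half_pow (Suc j)) l"
      using assms(3) half_pow_gf_zero by auto
  qed
qed

lemma star_pos_eq_nat_g_step:
  assumes "q \<le> p"
    and left: "q < p \<Longrightarrow> game_eq (star_pos p q) (nat_g (p - q))"
    and left_diagonal: "0 < p \<Longrightarrow> q = p \<Longrightarrow> game_eq (star_pos p q) (half_pow 1)"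
    and right: "0 < q \<Longrightarrow> game_eq (star_pos (Suc p) (q - 1)) (nat_g (Suc p - (q - 1)))"
  shows "game_eq (star_pos (Suc p) q) (nat_g (Suc p - q))"
proof -
  define k where "k = p - q"
  have "game_gf (nat_g (Suc k)) (star_pos p q)"
  proof (cases "q < p")
    case True
    then show ?thesis
      using left k_def game_gf_ge_trans[OF nat_g_gf_pred game_eq_imp_le] by auto
  next
    case False
    then have "q = p" "k = 0"
      using assms(1) k_def by auto
    moreover have "game_gf (nat_g (Suc 0)) (half_pow (Suc 0))"
      using half_pow_gf_Suc[of 0] by (simp add: half_pow_0)
    ultimately show ?thesis
      using left_diagonal nat_g_gf_pred[of 0] game_gf_ge_trans[OF _ game_eq_imp_le]
      by (cases "p = 0") auto
  qed
  moreover have "game_ge (star_pos p q) (nat_g k)" if "0 < k"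
    using left that k_def game_eq_imp_ge by auto
  moreover have "game_ge (star_pos (Suc p) (q - 1)) (nat_g (Suc (Suc k)))" if "0 < q"
  proof -
    have "Suc p - (q - 1) = Suc (Suc k)"
      using assms(1) that k_def by arith
    then show ?thesis
      using right that game_eq_imp_ge by auto
  qed
  ultimately have "game_eq (star_pos (Suc p) q) (nat_g (Suc k))"
    by (rule star_pos_eq_nat_gI)
  then show ?thesis
    using assms(1) k_def by (simp add: Suc_diff_le)
qed

lemma star_pos_eq_half_pow_step:
  assumes "Suc p \<le> q"
    and right_int: "q = Suc p \<Longrightarrow> game_eq (star_pos (Suc p) (q - 1)) (nat_g 1)"
    and right_half: "Suc p < q \<Longrightarrow> game_eq (star_pos (Suc p) (q - 1)) (half_pow (q - 1 - Suc p + 1))"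
    and left: "0 < p \<Longrightarrow> game_eq (star_pos p q) (half_pow (q - p + 1))"
  shows "game_eq (star_pos (Suc p) q) (half_pow (q - Suc p + 1))"
proof -
  define j where "j = q - Suc p"
  have "game_eq (star_pos (Suc p) (q - 1)) (half_pow j)"
  proof (cases "q = Suc p")
    case True
    then show ?thesis
      using right_int j_def by (simp add: half_pow_0)
  next
    case False
    then have "q - 1 - Suc p + 1 = j"
      using assms(1) j_def by arith
    then show ?thesis
      using right_half False assms(1) by auto
  qed
  moreover have "game_gf (half_pow (Suc j)) (star_pos p q)"
  proof (cases p)
    case 0
    then show ?thesis
      using assms(1) half_pow_gf_star_pos_zero by simp
  next
    case (Suc p')
    have "q - p + 1 = Suc (Suc j)"
      using assms(1) j_def by arith
    then have "game_eq (star_pos p q) (half_pow (Suc (Suc j)))"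
      using left Suc by auto
    then show ?thesis
      using half_pow_gf_Suc game_gf_ge_trans[OF _ game_eq_imp_le] by blast
  qed
  ultimately have "game_eq (star_pos (Suc p) q) (half_pow (Suc j))"
    using assms(1) by (intro star_pos_eq_half_powI) auto
  then show ?thesis
    using j_def by simp
qed

text \<open>The integer and the fractional values are found simultaneously: for \<open>q > 0\<close>,
  \<open>star_pos q q\<close>, a Left option of \<open>star_pos (q + 1) q\<close>, has value \<open>1/2\<close>, and \<open>star_pos p (p - 1)\<close>, a Right option of
  \<open>star_pos p p\<close>, has value \<open>1\<close>.\<close>

lemma star_pos_number_value:
  "(q < p \<longrightarrow> game_eq (star_pos p q) (nat_g (p - q)))
   \<and> (0 < p \<and> p \<le> q \<longrightarrow> game_eq (star_pos p q) (half_pow (q - p + 1)))"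
proof (induction "p + q" arbitrary: p q rule: less_induct)
  case less
  show ?case
  proof (cases p)
    case (Suc p')
    have left: "(q < p' \<longrightarrow> game_eq (star_pos p' q) (nat_g (p' - q)))
        \<and> (0 < p' \<and> p' \<le> q \<longrightarrow> game_eq (star_pos p' q) (half_pow (q - p' + 1)))"
      using less Suc by simp
    have right: "(q - 1 < p \<longrightarrow> game_eq (star_pos p (q - 1)) (nat_g (p - (q - 1))))
        \<and> (p \<le> q - 1 \<longrightarrow> game_eq (star_pos p (q - 1)) (half_pow (q - 1 - p + 1)))" if "0 < q"
      using less[of p "q - 1"] that Suc by simp
    have "game_eq (star_pos (Suc p') q) (nat_g (Suc p' - q))" if "q \<le> p'"
    proof (rule star_pos_eq_nat_g_step)
      show "game_eq (star_pos (Suc p') (q - 1)) (nat_g (Suc p' - (q - 1)))" if "0 < q"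
        using right \<open>0 < q\<close> \<open>q \<le> p'\<close> Suc by simp
    qed (use left that in simp_all)
    moreover have "game_eq (star_pos (Suc p') q) (half_pow (q - Suc p' + 1))" if "Suc p' \<le> q"
    proof (rule star_pos_eq_half_pow_step)
      show "game_eq (star_pos (Suc p') (q - 1)) (nat_g 1)" if "q = Suc p'"
        using right that Suc by simp
      show "game_eq (star_pos (Suc p') (q - 1)) (half_pow (q - 1 - Suc p' + 1))" if "Suc p' < q"
        using right that Suc by simp
    qed (use left that in simp_all)
    ultimately show ?thesis
      using Suc by auto
  qed simp
qed

lemma star_pos_value:
  "game_eq (star_pos p q)
     (if q < p then int_g (int p - int q)
      else if 1 \<le> p then half_pow (q - p + 1)
      else if odd q then gplus (ups (q - 1)) star_g
      else ups (q - 1))"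
  using star_pos_number_value[of q p] star_pos_zero_value[of q]
  by (cases "p = 0") (auto simp: int_g_def nat_diff_distrib)

section \<open>The domination game on a star\<close>

declare dg.simps [simp del]

lemma dg_swap_col: "dg V E (swap_col \<circ> c) D = neg (dg V E c D)"
proof (induction V E c D rule: dg.induct)
  case (1 V E c D)
  have "(\<lambda>v. (swap_col \<circ> c) v \<noteq> ColB \<and> P v) = (\<lambda>v. c v \<noteq> ColA \<and> P v)"
    and "(\<lambda>v. (swap_col \<circ> c) v \<noteq> ColA \<and> P v) = (\<lambda>v. c v \<noteq> ColB \<and> P v)" for P
    by (auto simp: fun_eq_iff swap_col_def split: color.splits)
  then show ?case
    using 1 by (subst (1 2) dg.simps) (auto simp: o_def intro!: map_cong)
qed

lemma set_lefts_dg: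
  "finite V \<Longrightarrow> set (lefts (dg V E c D)) =
     (\<lambda>v. dg V E c (D \<union> cnbhd V E v)) ` {v \<in> V. c v \<noteq> ColB \<and> \<not> cnbhd V E v \<subseteq> D}"
  by (subst dg.simps) auto

lemma set_rights_dg:
  "finite V \<Longrightarrow> set (rights (dg V E c D)) =
     (\<lambda>v. dg V E c (D \<union> cnbhd V E v)) ` {v \<in> V. c v \<noteq> ColA \<and> \<not> cnbhd V E v \<subseteq> D}"
  by (subst dg.simps) auto

lemma dg_dominated: "finite V \<Longrightarrow> V \<subseteq> D \<Longrightarrow> dg V E c D = zero_g"
  by (subst dg.simps) (auto simp: zero_g_def cnbhd_def filter_empty_conv)

lemma cnbhd_star_centre: "cnbhd {0..n} star_adj 0 = {0..n}"
  by (auto simp: cnbhd_def star_adj_def)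

lemma cnbhd_star_leaf: "i \<in> {1..n} \<Longrightarrow> cnbhd {0..n} star_adj i = {0, i}"
  by (auto simp: cnbhd_def star_adj_def)

lemma set_lefts_star_pos:
  "set (lefts (star_pos p q)) =
     (if 0 < p + q then {zero_g} else {}) \<union> (if 0 < p then {star_pos (p - 1) q} else {})"
  by (cases p; cases q) auto

lemma set_rights_star_pos:
  "set (rights (star_pos p q)) = (if 0 < q then {star_pos p (q - 1)} else {})"
  by (cases q) auto

definition undominated_leaves :: "nat \<Rightarrow> (nat \<Rightarrow> color) \<Rightarrow> color \<Rightarrow> nat set \<Rightarrow> nat set" where
  "undominated_leaves n c x D = {i \<in> {1..n}. i \<notin> D \<and> c i = x}"

lemma card_undominated_leaves_move:
  assumes "i \<in> undominated_leaves n c x D"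
  shows "card (undominated_leaves n c x (D \<union> {0, i})) = card (undominated_leaves n c x D) - 1"
proof -
  have "undominated_leaves n c x (D \<union> {0, i}) = undominated_leaves n c x D - {i}"
    by (auto simp: undominated_leaves_def)
  then show ?thesis
    using assms by (simp add: card_Diff_singleton)
qed

lemma undominated_leaves_move_other:
  "c i \<noteq> x \<Longrightarrow> undominated_leaves n c x (D \<union> {0, i}) = undominated_leaves n c x D"
  by (auto simp: undominated_leaves_def)

text \<open>The positions reached in the star game are \<open>D = {}\<close> and sets \<open>D\<close> containing the centre.\<close>

lemma star_playable:
  assumes "D \<subseteq> {0..n}" "0 \<in> D \<or> D = {} \<and> 1 \<le> n" "v \<in> {0..n}"
  shows "\<not> cnbhd {0..n} star_adj v \<subseteq> D \<longleftrightarrow> \<not> {1..n} \<subseteq> D \<and> (v = 0 \<or> v \<notin> D)"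
proof (cases "v = 0")
  case True
  have "{0..n} \<subseteq> D \<longleftrightarrow> {1..n} \<subseteq> D"
    using assms(2) by (auto simp: subset_iff) (metis Suc_leI neq0_conv)
  then show ?thesis
    using True by (simp add: cnbhd_star_centre)
next
  case False
  then have "v \<in> {1..n}"
    using assms(3) by simp
  then show ?thesis
    using assms(2) by (auto simp: cnbhd_star_leaf)
qed

lemma set_lefts_dg_star:
  assumes "c 0 = ColA" "\<forall>i\<in>{1..n}. c i = ColA \<or> c i = ColB"
    and "D \<subseteq> {0..n}" "0 \<in> D \<or> D = {} \<and> 1 \<le> n"
  shows "set (lefts (dg {0..n} star_adj c D)) =
     (if \<not> {1..n} \<subseteq> D then {zero_g} else {})
     \<union> (\<lambda>i. dg {0..n} star_adj c (D \<union> {0, i})) ` undominated_leaves n c ColA D"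
proof -
  have "v \<in> {0..n} \<and> c v \<noteq> ColB \<and> \<not> cnbhd {0..n} star_adj v \<subseteq> D \<longleftrightarrow>
      v \<in> (if \<not> {1..n} \<subseteq> D then {0} else {}) \<union> undominated_leaves n c ColA D" for v
    using assms(1,2) star_playable[OF assms(3,4), of v]
    by (cases "v = 0") (auto simp: undominated_leaves_def subset_iff Suc_le_eq)
  then have "{v \<in> {0..n}. c v \<noteq> ColB \<and> \<not> cnbhd {0..n} star_adj v \<subseteq> D}
      = (if \<not> {1..n} \<subseteq> D then {0} else {}) \<union> undominated_leaves n c ColA D"
    by blast
  moreover have "dg {0..n} star_adj c (D \<union> cnbhd {0..n} star_adj 0) = zero_g"
    by (simp add: cnbhd_star_centre dg_dominated)
  moreover have "(\<lambda>i. dg {0..n} star_adj c (D \<union> cnbhd {0..n} star_adj i)) ` undominated_leaves n c ColA D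
      = (\<lambda>i. dg {0..n} star_adj c (D \<union> {0, i})) ` undominated_leaves n c ColA D"
    by (rule image_cong) (auto simp: undominated_leaves_def cnbhd_star_leaf)
  ultimately show ?thesis
    by (simp add: set_lefts_dg image_Un)
qed

lemma set_rights_dg_star:
  assumes "c 0 = ColA" "\<forall>i\<in>{1..n}. c i = ColA \<or> c i = ColB"
    and "D \<subseteq> {0..n}" "0 \<in> D \<or> D = {} \<and> 1 \<le> n"
  shows "set (rights (dg {0..n} star_adj c D)) =
     (\<lambda>i. dg {0..n} star_adj c (D \<union> {0, i})) ` undominated_leaves n c ColB D"
proof -
  have "v \<in> {0..n} \<and> c v \<noteq> ColA \<and> \<not> cnbhd {0..n} star_adj v \<subseteq> D \<longleftrightarrow>
      v \<in> undominated_leaves n c ColB D" for v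
    using assms(1,2) star_playable[OF assms(3,4), of v]
    by (cases "v = 0") (auto simp: undominated_leaves_def subset_iff Suc_le_eq)
  then have "{v \<in> {0..n}. c v \<noteq> ColA \<and> \<not> cnbhd {0..n} star_adj v \<subseteq> D}
      = undominated_leaves n c ColB D"
    by blast
  moreover have "(\<lambda>i. dg {0..n} star_adj c (D \<union> cnbhd {0..n} star_adj i)) ` undominated_leaves n c ColB D
      = (\<lambda>i. dg {0..n} star_adj c (D \<union> {0, i})) ` undominated_leaves n c ColB D"
    by (rule image_cong) (auto simp: undominated_leaves_def cnbhd_star_leaf)
  ultimately show ?thesis
    by (simp add: set_rights_dg)
qed

lemma rel_set_image_const:
  "(\<And>x. x \<in> A \<Longrightarrow> R (f x) y) \<Longrightarrow> rel_set R (f ` A) (if A \<noteq> {} then {y} else {})"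
  by (auto simp: rel_set_def)

lemma dg_star_eq_star_pos:
  assumes c: "c 0 = ColA" "\<forall>i\<in>{1..n}. c i = ColA \<or> c i = ColB"
    and "D \<subseteq> {0..n}" "0 \<in> D \<or> D = {} \<and> 1 \<le> n"
  shows "game_eq (dg {0..n} star_adj c D)
    (star_pos (card (undominated_leaves n c ColA D)) (card (undominated_leaves n c ColB D)))"
  using assms(3,4)
proof (induction "card ({0..n} - D)" arbitrary: D rule: less_induct)
  case less
  let ?A = "undominated_leaves n c ColA D" and ?B = "undominated_leaves n c ColB D"
  let ?move = "\<lambda>i. dg {0..n} star_adj c (D \<union> {0, i})"
  have fin: "finite ?A" "finite ?B"
    by (simp_all add: undominated_leaves_def)
  have move: "game_eq (?move i) (star_pos (card (undominated_leaves n c ColA (D \<union> {0, i})))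
      (card (undominated_leaves n c ColB (D \<union> {0, i}))))"
    if "i \<in> {1..n}" "i \<notin> D" for i
  proof (rule less.hyps)
    have "{0..n} - (D \<union> {0, i}) \<subset> {0..n} - D"
      using that by fastforce
    then show "card ({0..n} - (D \<union> {0, i})) < card ({0..n} - D)"
      by (simp add: psubset_card_mono)
    show "D \<union> {0, i} \<subseteq> {0..n}"
      using less.prems(1) that by auto
  qed simp
  have moveA: "game_eq (?move i) (star_pos (card ?A - 1) (card ?B))" if "i \<in> ?A" for i
  proof -
    have "i \<in> {1..n}" "i \<notin> D" "c i \<noteq> ColB"
      using that by (auto simp: undominated_leaves_def)
    then show ?thesis
      using move[of i] card_undominated_leaves_move[OF that]
        undominated_leaves_move_other[of c i "ColB"]
      by simp
  qed
  have moveB: "game_eq (?move i) (star_pos (card ?A) (card ?B - 1))" if "i \<in> ?B" for i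
  proof -
    have "i \<in> {1..n}" "i \<notin> D" "c i \<noteq> ColA"
      using that by (auto simp: undominated_leaves_def)
    then show ?thesis
      using move[of i] card_undominated_leaves_move[OF that]
        undominated_leaves_move_other[of c i "ColA"]
      by simp
  qed
  have cardA: "0 < card ?A \<longleftrightarrow> ?A \<noteq> {}" and cardB: "0 < card ?B \<longleftrightarrow> ?B \<noteq> {}"
    using fin by auto
  have "?A \<union> ?B = {1..n} - D"
    using c(2) by (auto simp: undominated_leaves_def)
  then have cardAB: "0 < card ?A + card ?B \<longleftrightarrow> \<not> {1..n} \<subseteq> D"
    using cardA cardB by auto
  show ?case
  proof (rule game_eq_optionsI)
    show "rel_set game_eq (set (lefts (dg {0..n} star_adj c D)))
        (set (lefts (star_pos (card ?A) (card ?B))))"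
      unfolding set_lefts_dg_star[OF c less.prems] set_lefts_star_pos cardAB cardA
      by (intro union_transfer[THEN rel_funD, THEN rel_funD] rel_set_image_const moveA)
         (auto simp: rel_set_def)
    show "rel_set game_eq (set (rights (dg {0..n} star_adj c D)))
        (set (rights (star_pos (card ?A) (card ?B))))"
      unfolding set_rights_dg_star[OF c less.prems] set_rights_star_pos cardB
      using moveB by (rule rel_set_image_const)
  qed
qed

theorem theorem6:
  fixes n a b :: nat and c :: "nat \<Rightarrow> color"
  assumes "n \<ge> 2"
    and "\<forall>i\<in>{1..n}. c i = ColA \<or> c i = ColB"
    and "a = card {i \<in> {1..n}. c i = ColA}"
    and "b = n - a"
  shows "(c 0 = ColA \<longrightarrow>
            game_eq (star_game n c)
              (if b < a then int_g (int a - int b)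
               else if 1 \<le> a then half_pow (b - a + 1)
               else if odd b then gplus (ups (b - 1)) star_g
               else ups (b - 1)))
       \<and> (c 0 = ColB \<longrightarrow>
            game_eq (star_game n c) (neg (star_game n (swap_col \<circ> c))))"
proof (intro conjI impI)
  assume c0: "c 0 = ColA"
  have "card (undominated_leaves n c ColA {}) = a"
    by (simp add: undominated_leaves_def assms(3))
  moreover have "undominated_leaves n c ColB {} = {1..n} - {i \<in> {1..n}. c i = ColA}"
    using assms(2) by (auto simp: undominated_leaves_def)
  moreover have "card ({1..n} - {i \<in> {1..n}. c i = ColA}) = b"
    using card_Diff_subset[of "{i \<in> {1..n}. c i = ColA}" "{1..n}"] assms(3,4) by force
  ultimately have "card (undominated_leaves n c ColA {}) = a" "card (undominated_leaves n c ColB {}) = b"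
    by simp_all
  then have "game_eq (star_game n c) (star_pos a b)"
    using dg_star_eq_star_pos[OF c0 assms(2), of "{}"] assms(1)
    by (simp add: star_game_def dom_game_def)
  then show "game_eq (star_game n c)
      (if b < a then int_g (int a - int b)
       else if 1 \<le> a then half_pow (b - a + 1)
       else if odd b then gplus (ups (b - 1)) star_g
       else ups (b - 1))"
    using star_pos_value by (rule game_eq_trans)
next
  show "game_eq (star_game n c) (neg (star_game n (swap_col \<circ> c)))"
    by (simp add: star_game_def dom_game_def dg_swap_col)
qed

end
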